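(* Let $v_1,v_2$ be two adjacent vertices of $\mathscr{BG}_+(n)$ with associated collections $\mathscr{D}_1,\mathscr{D}_2$ such that $\bigcap\mathscr{D}_1=\{i\}$ and $\bigcap\mathscr{D}_2=\{j\}$. Let $v=\lambda v_1+(1-\lambda)v_2$ with $\lambda\in\,]0,1[$. Then: (1) if $i=j$, the core $C(v)$ is a singleton; (2) if $i\neq j$ and $n\leqslant 4$, the core $C(v)$ is a singleton.
   Context: $N=\{1,\ldots,n\}$; a game is a map $v:2^N\to\mathbb{R}$ with $v(\varnothing)=0$. The core is $C(v)=\{x\in\mathbb{R}^N:\sum_{i\in S}x_i\geqslant v(S)\ \forall S,\ \sum_{i\in N}x_i=v(N)\}$. $\mathscr{BG}_+(n)$ is the polytope (in $\mathbb{R}^{2^N\setminus\{\varnothing,N\}}$) of games with $v\geqslant0$, $v(N)=1$ and $C(v)\neq\varnothing$. The collection associated to a vertex $v$ is $\mathscr{D}=\{S:\varnothing\neq S\subsetneq N,\ v(S)=1\}$; $\bigcap\mathscr{D}$ is the intersection of its members. Two vertices are adjacent if they lie on a common edge of the polytope. *)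

theory Defs
  imports "HOL-Analysis.Analysis"
begin

text \<open>Players: the finite type 'n, N = UNIV. A game is a vector indexed by all
coalitions; the coordinates of the empty set and of N are fixed (0 and 1) on the
polytope, so the polytope is an injective affine image of the one in the paper.\<close>

type_synonym 'n game = "real ^ ('n set)"

definition core :: "('n::finite) game \<Rightarrow> ('n \<Rightarrow> real) set" where
  "core v = {x. (\<forall>S. sum x S \<ge> v $ S) \<and> sum x UNIV = v $ UNIV}"

definition BGplus :: "('n::finite) game set" where
  "BGplus = {v. v $ {} = 0 \<and> v $ UNIV = 1 \<and> (\<forall>S. v $ S \<ge> 0) \<and> core v \<noteq> {}}"

definition is_vertex :: "('n::finite) game \<Rightarrow> bool" where
  "is_vertex v \<longleftrightarrow> v extreme_point_of BGplus"

definition adjacent :: "('n::finite) game \<Rightarrow> ('n::finite) game \<Rightarrow> bool" where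
  "adjacent v1 v2 \<longleftrightarrow> is_vertex v1 \<and> is_vertex v2 \<and> v1 \<noteq> v2 \<and>
     (\<exists>F. F face_of BGplus \<and> aff_dim F = 1 \<and> v1 \<in> F \<and> v2 \<in> F)"

definition collection :: "('n::finite) game \<Rightarrow> 'n set set" where
  "collection v = {S. S \<noteq> {} \<and> S \<noteq> UNIV \<and> v $ S = 1}"

end

theory Submission
  imports Defs
begin

text \<open>Every core allocation x of a game w on the edge through v1 and v2 vanishes
outside {i, j}. Indeed, if x k > 0 then w is a proper convex combination of two games
of BG+, one of which, equal to w(S)/x(S) on coalitions S containing k and to 0
elsewhere, has the unit vector of k in its core. Since the edge is a face, that game
lies on the line through v1 and v2; but it vanishes on a coalition of value 1 for v1
and on one of value 1 for v2, both avoiding k, and no point of the line does so.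
Once the support is known, efficiency and the core constraints of those coalitions
determine x.\<close>

lemma core_nonneg:
  assumes "\<forall>S. w $ S \<ge> 0" and "x \<in> core w"
  shows "x k \<ge> 0"
proof -
  have "0 \<le> w $ {k}" using assms(1) by blast
  also have "w $ {k} \<le> sum x {k}" using assms(2) unfolding core_def by blast
  finally show ?thesis by simp
qed

lemma BGplus_le_one:
  assumes "w \<in> BGplus"
  shows "w $ S \<le> 1"
proof -
  obtain x where x: "x \<in> core w" and w: "\<forall>S. w $ S \<ge> 0" "w $ UNIV = 1"
    using assms unfolding BGplus_def by auto
  have "w $ S \<le> sum x S" using x by (simp add: core_def)
  also have "\<dots> \<le> sum x UNIV"
    by (rule sum_mono2) (auto intro: core_nonneg[OF w(1) x])
  also have "\<dots> = 1" using x w by (simp add: core_def)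
  finally show ?thesis .
qed

definition concentrated_game :: "('n::finite) game \<Rightarrow> ('n \<Rightarrow> real) \<Rightarrow> 'n \<Rightarrow> 'n game" where
  "concentrated_game w x k = (\<chi> S. if k \<in> S then w $ S / sum x S else 0)"

lemma core_ratio_le_one:
  assumes "\<forall>S. w $ S \<ge> 0" and "x \<in> core w"
  shows "w $ S / sum x S \<le> 1"
proof (cases "sum x S = 0")
  case False
  have "0 \<le> sum x S" using assms by (simp add: core_nonneg sum_nonneg)
  with False have "0 < sum x S" by simp
  then show ?thesis using assms(2) by (simp add: core_def)
qed simp

lemma concentrated_game_in_BGplus:
  assumes w: "w \<in> BGplus" and x: "x \<in> core w"
  shows "concentrated_game w x k \<in> BGplus"
proof -
  have wn: "\<forall>S. w $ S \<ge> 0" and w1: "w $ UNIV = 1" using w by (auto simp: BGplus_def)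
  have xU: "sum x UNIV = 1" using x w1 by (simp add: core_def)
  have "(\<lambda>l. if l = k then 1 else 0) \<in> core (concentrated_game w x k)"
    using core_ratio_le_one[OF wn x] by (auto simp: core_def concentrated_game_def xU w1)
  moreover have "\<forall>S. concentrated_game w x k $ S \<ge> 0"
    using wn x by (simp add: concentrated_game_def core_nonneg sum_nonneg)
  ultimately show ?thesis by (auto simp: BGplus_def concentrated_game_def xU w1)
qed

lemma BGplus_split_concentrated_game:
  assumes w: "w \<in> BGplus" and x: "x \<in> core w" and xk: "0 < x k"
  obtains B t where "B \<in> BGplus" "0 < t" "t < 1"
    "w = t *\<^sub>R concentrated_game w x k + (1 - t) *\<^sub>R B"
proof -
  define A where "A = concentrated_game w x k"
  have wn: "\<forall>S. w $ S \<ge> 0" and w0: "w $ {} = 0" and w1: "w $ UNIV = 1"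
    using w by (auto simp: BGplus_def)
  have wx: "\<And>S. w $ S \<le> sum x S" and xU: "sum x UNIV = 1" using x w1 by (auto simp: core_def)
  have xk_le: "\<And>S. k \<in> S \<Longrightarrow> x k \<le> sum x S"
    using core_nonneg[OF wn x] by (simp add: member_le_sum)
  define t where "t = x k / 2"
  have t: "0 < t" "t < 1" using xk xk_le[of UNIV] xU by (auto simp: t_def)
  have t_less: "\<And>S. k \<in> S \<Longrightarrow> t < sum x S" using xk_le xk by (fastforce simp: t_def)
  have bounds: "0 \<le> w $ S - t * A $ S \<and> w $ S - t * A $ S \<le> sum x S - (if k \<in> S then t else 0)"
    for S
  proof (cases "k \<in> S")
    case True
    then have pos: "0 < sum x S" using t_less[of S] t by simp
    then have "w $ S - t * A $ S = (w $ S / sum x S) * (sum x S - t)"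
      using True by (simp add: A_def concentrated_game_def field_simps)
    moreover have "0 \<le> w $ S / sum x S" "w $ S / sum x S \<le> 1" "0 \<le> sum x S - t"
      using wn core_ratio_le_one[OF wn x] t_less[OF True] pos by auto
    ultimately show ?thesis using True by (smt (verit) mult_left_le_one_le mult_nonneg_nonneg)
  qed (simp add: A_def concentrated_game_def wn wx)
  define B where "B = (\<chi> S. (w $ S - t * A $ S) / (1 - t))"
  define y where "y = (\<lambda>l. (x l - (if l = k then t else 0)) / (1 - t))"
  have "sum y S = (sum x S - (if k \<in> S then t else 0)) / (1 - t)" for S
    by (simp add: y_def sum_divide_distrib[symmetric] sum_subtractf)
  then have "y \<in> core B"
    using bounds t by (auto simp: core_def B_def A_def concentrated_game_def xU w1 divide_right_mono)
  then have "B \<in> BGplus"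
    using bounds t by (auto simp: BGplus_def B_def A_def concentrated_game_def xU w1 w0)
  moreover have "w = t *\<^sub>R A + (1 - t) *\<^sub>R B"
    using t by (simp add: vec_eq_iff B_def)
  ultimately show ?thesis using that t unfolding A_def by blast
qed

lemma face_of_convex_combination_imp_mem:
  assumes "F face_of S" "a \<in> S" "b \<in> S" "0 < t" "t < 1" "t *\<^sub>R a + (1 - t) *\<^sub>R b \<in> F"
  shows "a \<in> F"
proof (cases "a = b")
  case True
  then show ?thesis using assms(6) by (simp flip: scaleR_add_left)
next
  case False
  then have "t *\<^sub>R a + (1 - t) *\<^sub>R b \<in> open_segment b a"
    using assms(4,5) unfolding in_segment by (intro conjI exI[of _ t]) (auto simp: algebra_simps)
  then show ?thesis using face_ofD assms(1-3,6) by blast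
qed

lemma aff_dim_one_subset_affine_hull_2:
  fixes F :: "'a::euclidean_space set"
  assumes "aff_dim F = 1" "a \<in> F" "b \<in> F" "a \<noteq> b"
  shows "F \<subseteq> affine hull {a, b}"
proof
  fix c assume "c \<in> F"
  have "collinear F" using assms(1) by (simp add: collinear_aff_dim)
  then have "collinear {a, b, c}" by (rule collinear_subset) (use assms \<open>c \<in> F\<close> in auto)
  then show "c \<in> affine hull {a, b}" using collinear_3_affine_hull assms(4) by blast
qed

lemma line_coordinates_not_both_zero:
  fixes u a b :: real
  assumes "a \<le> 1" "0 \<le> b" "b \<le> 1" "u * b + (1 - u) = 0"
  shows "u + (1 - u) * a \<noteq> 0"
proof -
  have "u * (1 - b) = 1" using assms(4) by (simp add: algebra_simps)
  then have "0 < u" using mult_nonpos_nonneg[of u "1 - b"] assms(3) by fastforce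
  then have "1 - u \<le> 0" using mult_nonneg_nonneg[of u b] assms(2,4) by linarith
  then have "1 - u \<le> (1 - u) * a" using assms(1) by (simp add: mult_le_cancel_left1)
  then show ?thesis by linarith
qed

lemma core_vanishes_at_excluded_player:
  assumes F: "F face_of BGplus" "aff_dim F = 1" "v1 \<in> F" "v2 \<in> F" "v1 \<noteq> v2"
    and w: "w \<in> F" and x: "x \<in> core w"
    and S1: "v1 $ S1 = 1" "k \<notin> S1" and S2: "v2 $ S2 = 1" "k \<notin> S2"
  shows "x k = 0"
proof (rule ccontr)
  assume "x k \<noteq> 0"
  have wB: "w \<in> BGplus" and vB: "v1 \<in> BGplus" "v2 \<in> BGplus"
    using F(1,3,4) w face_of_imp_subset by blast+
  have "0 \<le> x k" using wB x core_nonneg by (auto simp: BGplus_def)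
  with \<open>x k \<noteq> 0\<close> have "0 < x k" by simp
  define A where "A = concentrated_game w x k"
  obtain B t where B: "B \<in> BGplus" and t: "0 < t" "t < 1"
    and w_eq: "w = t *\<^sub>R A + (1 - t) *\<^sub>R B"
    using BGplus_split_concentrated_game[OF wB x \<open>0 < x k\<close>] unfolding A_def .
  have "A \<in> F"
    using face_of_convex_combination_imp_mem[OF F(1) _ B t] concentrated_game_in_BGplus[OF wB x] w w_eq
    unfolding A_def by simp
  then have "A \<in> affine hull {v1, v2}" using aff_dim_one_subset_affine_hull_2[OF F(2-5)] by blast
  then obtain u u' where "A = u *\<^sub>R v1 + u' *\<^sub>R v2" "u + u' = 1"
    unfolding affine_hull_2 by blast
  then have u: "A = u *\<^sub>R v1 + (1 - u) *\<^sub>R v2" by (metis add_diff_cancel_left')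
  have "u * v1 $ S2 + (1 - u) = 0"
    using arg_cong[OF u, of "\<lambda>z. z $ S2"] S2 by (simp add: A_def concentrated_game_def)
  moreover have "v2 $ S1 \<le> 1" "0 \<le> v1 $ S2" "v1 $ S2 \<le> 1"
    using vB BGplus_le_one by (auto simp: BGplus_def)
  ultimately have "u + (1 - u) * v2 $ S1 \<noteq> 0"
    using line_coordinates_not_both_zero by blast
  then show False
    using arg_cong[OF u, of "\<lambda>z. z $ S1"] S1 by (simp add: A_def concentrated_game_def)
qed

lemma adjacent_closed_segment_subset_edge:
  assumes "adjacent v1 v2"
  obtains F where "F face_of BGplus" "aff_dim F = 1" "v1 \<in> F" "v2 \<in> F" "v1 \<noteq> v2"
    "closed_segment v1 v2 \<subseteq> F"
proof -
  obtain F where F: "F face_of BGplus" "aff_dim F = 1" "v1 \<in> F" "v2 \<in> F" and "v1 \<noteq> v2"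
    using assms unfolding adjacent_def by blast
  moreover have "closed_segment v1 v2 \<subseteq> F"
    using closed_segment_subset face_of_imp_convex F by blast
  ultimately show ?thesis using that by blast
qed

lemma adjacent_closed_segment_subset_BGplus:
  "adjacent v1 v2 \<Longrightarrow> closed_segment v1 v2 \<subseteq> BGplus"
  by (metis adjacent_closed_segment_subset_edge face_of_imp_subset order_trans)

lemma collection_separates_center:
  assumes "\<Inter> (collection v) = {i}" "k \<noteq> i"
  obtains S where "v $ S = 1" "i \<in> S" "k \<notin> S"
  using assms unfolding collection_def by blast

lemma adjacent_core_vanishes_off_centers:
  assumes "adjacent v1 v2" "\<Inter> (collection v1) = {i}" "\<Inter> (collection v2) = {j}"
    and "w \<in> closed_segment v1 v2" "x \<in> core w" "k \<noteq> i" "k \<noteq> j"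
  shows "x k = 0"
proof -
  obtain F where F: "F face_of BGplus" "aff_dim F = 1" "v1 \<in> F" "v2 \<in> F" "v1 \<noteq> v2"
    and "closed_segment v1 v2 \<subseteq> F"
    using adjacent_closed_segment_subset_edge[OF assms(1)] .
  obtain S1 where "v1 $ S1 = 1" "k \<notin> S1" using collection_separates_center assms(2,6) .
  moreover obtain S2 where "v2 $ S2 = 1" "k \<notin> S2" using collection_separates_center assms(3,7) .
  ultimately show ?thesis
    using core_vanishes_at_excluded_player[OF F] assms(4,5) \<open>closed_segment v1 v2 \<subseteq> F\<close> by blast
qed

lemma sum_eq_sum_Int_support:
  fixes x :: "'a \<Rightarrow> 'b::comm_monoid_add"
  assumes "finite S" "\<And>l. l \<notin> T \<Longrightarrow> x l = 0"
  shows "sum x S = sum x (S \<inter> T)"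
  using assms by (intro sum.mono_neutral_right) auto

lemma core_eq_if_supported_on_one:
  fixes w :: "('n::finite) game"
  assumes "core w \<noteq> {}" "w $ UNIV = 1" "\<And>x l. x \<in> core w \<Longrightarrow> l \<noteq> i \<Longrightarrow> x l = 0"
  shows "core w = {indicator {i}}"
proof -
  have "x = indicator {i}" if x: "x \<in> core w" for x
  proof
    fix l
    have "1 = sum x UNIV" using x assms(2) by (simp add: core_def)
    also have "\<dots> = x i"
      using sum_eq_sum_Int_support[of UNIV "{i}" x] assms(3)[OF x] by simp
    finally show "x l = indicator {i} l" using assms(3)[OF x, of l] by (cases "l = i") auto
  qed
  then show ?thesis using assms(1) by blast
qed

lemma core_eq_if_supported_on_two:
  fixes w :: "('n::finite) game"
  assumes "core w \<noteq> {}" "w $ UNIV = 1" "i \<noteq> j"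
    and supp: "\<And>x l. x \<in> core w \<Longrightarrow> l \<noteq> i \<Longrightarrow> l \<noteq> j \<Longrightarrow> x l = 0"
    and S1: "i \<in> S1" "j \<notin> S1" "lam \<le> w $ S1" and S2: "j \<in> S2" "i \<notin> S2" "1 - lam \<le> w $ S2"
  shows "core w = {\<lambda>l. lam * indicator {i} l + (1 - lam) * indicator {j} l}"
proof -
  have "x = (\<lambda>l. lam * indicator {i} l + (1 - lam) * indicator {j} l)" if x: "x \<in> core w" for x
  proof
    fix l
    have sum_x: "sum x S = sum x (S \<inter> {i, j})" for S
      using sum_eq_sum_Int_support[of S "{i, j}" x] supp[OF x] by auto
    have total: "1 = x i + x j"
      using x assms(2,3) sum_x[of UNIV] by (simp add: core_def)
    have "w $ S \<le> sum x S" for S using x by (simp add: core_def)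
    moreover have "sum x S1 = x i" "sum x S2 = x j"
      using S1 S2 sum_x[of S1] sum_x[of S2] by (auto simp: Int_insert_right)
    ultimately have "lam \<le> x i" "1 - lam \<le> x j" using S1(3) S2(3) by (metis order_trans)+
    with total have "x i = lam" "x j = 1 - lam" by auto
    then show "x l = lam * indicator {i} l + (1 - lam) * indicator {j} l"
      using supp[OF x, of l] assms(3) by (auto simp: indicator_def)
  qed
  then show ?thesis using assms(1) by blast
qed

theorem theorem20:
  fixes v1 v2 :: "('n::finite) game" and i j :: 'n and lam :: real
  assumes "adjacent v1 v2"
    and "\<Inter> (collection v1) = {i}"
    and "\<Inter> (collection v2) = {j}"
    and "0 < lam" and "lam < 1"
  shows "(i = j \<longrightarrow> (\<exists>x. core (lam *\<^sub>R v1 + (1 - lam) *\<^sub>R v2) = {x}))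
       \<and> (i \<noteq> j \<and> CARD('n) \<le> 4 \<longrightarrow> (\<exists>x. core (lam *\<^sub>R v1 + (1 - lam) *\<^sub>R v2) = {x}))"
proof -
  define v where "v = lam *\<^sub>R v1 + (1 - lam) *\<^sub>R v2"
  have "v \<in> closed_segment v1 v2"
    using assms(4,5) unfolding v_def closed_segment_def by (intro CollectI exI[of _ "1 - lam"]) auto
  moreover have "v1 \<in> closed_segment v1 v2" "v2 \<in> closed_segment v1 v2" by auto
  ultimately have "v \<in> BGplus" and v12: "v1 \<in> BGplus" "v2 \<in> BGplus"
    using adjacent_closed_segment_subset_BGplus[OF assms(1)] by blast+
  from \<open>v \<in> BGplus\<close> have core_ne: "core v \<noteq> {}" and v_UNIV: "v $ UNIV = 1" by (auto simp: BGplus_def)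
  note supp = adjacent_core_vanishes_off_centers[OF assms(1-3) \<open>v \<in> closed_segment v1 v2\<close>]
  have "\<exists>x. core v = {x}" if "i = j"
    using core_eq_if_supported_on_one[OF core_ne v_UNIV] supp that by blast
  moreover have "\<exists>x. core v = {x}" if ij: "i \<noteq> j"
  proof -
    obtain S1 where S1: "v1 $ S1 = 1" "i \<in> S1" "j \<notin> S1"
      using collection_separates_center[OF assms(2), of j] ij by blast
    obtain S2 where S2: "v2 $ S2 = 1" "j \<in> S2" "i \<notin> S2"
      using collection_separates_center[OF assms(3), of i] ij by blast
    have "lam \<le> v $ S1" "1 - lam \<le> v $ S2"
      using S1(1) S2(1) v12 assms(4,5) by (auto simp: v_def BGplus_def)
    with core_eq_if_supported_on_two[of v i j S1 lam S2] show ?thesis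
      using core_ne v_UNIV ij supp S1(2,3) S2(2,3) by blast
  qed
  ultimately show ?thesis unfolding v_def by blast
qed

end
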